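(* Let $\xi\in\mathfrak X(\mathcal M)$ and $m\ge2$ an integer. Then $$\mathcal L^{(m)}_\xi R^\mu{}_{\alpha\nu\beta}=H^{\gamma\rho}_{\nu\beta}\Big(\nabla_\gamma\Sigma^{(m)}{}^\mu{}_{\alpha\rho}+\sum_{k=0}^{m-2}\binom{m}{k+1}\Sigma^{(m-k-1)}{}^\sigma{}_{\alpha\rho}\Sigma^{(k+1)}{}^\mu{}_{\sigma\gamma}\Big)$$ and $$\mathcal L^{(m)}_\xi R_{\alpha\beta}=H^{\gamma\rho}_{\mu\beta}\Big(\nabla_\gamma\Sigma^{(m)}{}^\mu{}_{\alpha\rho}+\sum_{k=0}^{m-2}\binom{m}{k+1}\Sigma^{(m-k-1)}{}^\sigma{}_{\alpha\rho}\Sigma^{(k+1)}{}^\mu{}_{\sigma\gamma}\Big).$$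
   Context: $(\mathcal M,g)$ is a semi-Riemannian manifold with Levi-Civita connection $\nabla$, Riemann tensor $R^\mu{}_{\alpha\nu\beta}$ with the convention $(\nabla_\nu\nabla_\beta-\nabla_\beta\nabla_\nu)X^\mu=R^\mu{}_{\alpha\nu\beta}X^\alpha$, and Ricci tensor $R_{\alpha\beta}=R^\mu{}_{\alpha\mu\beta}$. $\mathcal L^{(m)}_\xi$ is the $m$-fold Lie derivative. $H^{\gamma\rho}_{\nu\beta}:=\delta^\gamma_\nu\delta^\rho_\beta-\delta^\gamma_\beta\delta^\rho_\nu$. $\Sigma:=\mathcal L_\xi\nabla$, i.e. $\Sigma^\alpha{}_{\mu\nu}=\frac12g^{\alpha\beta}(\nabla_\mu\mathcal K_{\nu\beta}+\nabla_\nu\mathcal K_{\mu\beta}-\nabla_\beta\mathcal K_{\mu\nu})$ with $\mathcal K:=\mathcal L_\xi g$, and $\Sigma^{(k)}:=\mathcal L^{(k-1)}_\xi\Sigma$ for $k\ge1$. *)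

theory Defs
  imports "HOL-Analysis.Analysis"
begin

text \<open>Local-coordinate rendering: the manifold is represented by a coordinate chart,
an open set U of real^'n; tensor fields are given by their component functions
(indices range over the finite type 'n). Index order in the names follows the paper:
upper indices first, then lower indices in order.\<close>

type_synonym 'n vf  = "'n \<Rightarrow> real^'n \<Rightarrow> real"
type_synonym 'n t02 = "'n \<Rightarrow> 'n \<Rightarrow> real^'n \<Rightarrow> real"
type_synonym 'n t12 = "'n \<Rightarrow> 'n \<Rightarrow> 'n \<Rightarrow> real^'n \<Rightarrow> real"
type_synonym 'n t13 = "'n \<Rightarrow> 'n \<Rightarrow> 'n \<Rightarrow> 'n \<Rightarrow> real^'n \<Rightarrow> real"

definition pd :: "'n::finite \<Rightarrow> (real^'n \<Rightarrow> real) \<Rightarrow> real^'n \<Rightarrow> real" where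
  "pd i f x = deriv (\<lambda>t. f (x + t *\<^sub>R axis i 1)) 0"

primrec Ck :: "nat \<Rightarrow> (real^'n::finite) set \<Rightarrow> (real^'n \<Rightarrow> real) \<Rightarrow> bool" where
  "Ck 0 U f = continuous_on U f"
| "Ck (Suc k) U f = ((\<forall>x\<in>U. f differentiable (at x)) \<and> (\<forall>i. Ck k U (pd i f)))"

definition coord_smooth :: "(real^'n::finite) set \<Rightarrow> (real^'n \<Rightarrow> real) \<Rightarrow> bool" where
  "coord_smooth U f = (\<forall>k. Ck k U f)"

definition semi_riem_metric :: "(real^'n::finite) set \<Rightarrow> 'n t02 \<Rightarrow> bool" where
  "semi_riem_metric U g =
     ((\<forall>i j. coord_smooth U (g i j)) \<and> (\<forall>i j x. g i j x = g j i x)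
      \<and> (\<forall>x\<in>U. det (\<chi> i j. g i j x) \<noteq> 0))"

definition ginv :: "'n::finite t02 \<Rightarrow> 'n t02" where
  "ginv g i j x = matrix_inv (\<chi> a b. g a b x) $ i $ j"

definition chris :: "'n::finite t02 \<Rightarrow> 'n t12" where
  "chris g a b c x = (1/2) * (\<Sum>d\<in>UNIV. ginv g a d x *
      (pd b (g c d) x + pd c (g b d) x - pd d (g b c) x))"

text \<open>Covariant derivatives: cov02 g K e b c = \<nabla>_e K_{bc}; cov12 g T e a b c = \<nabla>_e T^a_{bc}.\<close>
definition cov02 :: "'n::finite t02 \<Rightarrow> 'n t02 \<Rightarrow> 'n t12" where
  "cov02 g K e b c x = pd e (K b c) x
     - (\<Sum>d\<in>UNIV. chris g d e b x * K d c x) - (\<Sum>d\<in>UNIV. chris g d e c x * K b d x)"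

definition cov12 :: "'n::finite t02 \<Rightarrow> 'n t12 \<Rightarrow> 'n t13" where
  "cov12 g T e a b c x = pd e (T a b c) x
     + (\<Sum>d\<in>UNIV. chris g a e d x * T d b c x)
     - (\<Sum>d\<in>UNIV. chris g d e b x * T a d c x)
     - (\<Sum>d\<in>UNIV. chris g d e c x * T a b d x)"

text \<open>Riemann tensor R^\<mu>_{\<alpha>\<nu>\<beta>} with (\<nabla>_\<nu>\<nabla>_\<beta> - \<nabla>_\<beta>\<nabla>_\<nu>)X^\<mu> = R^\<mu>_{\<alpha>\<nu>\<beta>} X^\<alpha>,
written out in coordinates; Ricci R_{\<alpha>\<beta>} = R^\<mu>_{\<alpha>\<mu>\<beta>}.\<close>
definition riem :: "'n::finite t02 \<Rightarrow> 'n t13" where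
  "riem g \<mu> \<alpha> \<nu> \<beta> x = pd \<nu> (chris g \<mu> \<beta> \<alpha>) x - pd \<beta> (chris g \<mu> \<nu> \<alpha>) x
     + (\<Sum>l\<in>UNIV. chris g \<mu> \<nu> l x * chris g l \<beta> \<alpha> x)
     - (\<Sum>l\<in>UNIV. chris g \<mu> \<beta> l x * chris g l \<nu> \<alpha> x)"

definition ricci :: "'n::finite t02 \<Rightarrow> 'n t02" where
  "ricci g \<alpha> \<beta> x = (\<Sum>\<mu>\<in>UNIV. riem g \<mu> \<alpha> \<mu> \<beta> x)"

definition lie02 :: "'n::finite vf \<Rightarrow> 'n t02 \<Rightarrow> 'n t02" where
  "lie02 \<xi> T a b x = (\<Sum>c\<in>UNIV. \<xi> c x * pd c (T a b) x)
     + (\<Sum>c\<in>UNIV. T c b x * pd a (\<xi> c) x) + (\<Sum>c\<in>UNIV. T a c x * pd b (\<xi> c) x)"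

definition lie12 :: "'n::finite vf \<Rightarrow> 'n t12 \<Rightarrow> 'n t12" where
  "lie12 \<xi> T a b c x = (\<Sum>d\<in>UNIV. \<xi> d x * pd d (T a b c) x)
     - (\<Sum>d\<in>UNIV. T d b c x * pd d (\<xi> a) x)
     + (\<Sum>d\<in>UNIV. T a d c x * pd b (\<xi> d) x) + (\<Sum>d\<in>UNIV. T a b d x * pd c (\<xi> d) x)"

definition lie13 :: "'n::finite vf \<Rightarrow> 'n t13 \<Rightarrow> 'n t13" where
  "lie13 \<xi> T a b c e x = (\<Sum>d\<in>UNIV. \<xi> d x * pd d (T a b c e) x)
     - (\<Sum>d\<in>UNIV. T d b c e x * pd d (\<xi> a) x)
     + (\<Sum>d\<in>UNIV. T a d c e x * pd b (\<xi> d) x)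
     + (\<Sum>d\<in>UNIV. T a b d e x * pd c (\<xi> d) x)
     + (\<Sum>d\<in>UNIV. T a b c d x * pd e (\<xi> d) x)"

text \<open>\<K> = L_\<xi> g; \<Sigma> = L_\<xi>\<nabla>; \<Sigma>^(k) = L_\<xi>^(k-1) \<Sigma> for k \<ge> 1.\<close>
definition Kdef :: "'n::finite vf \<Rightarrow> 'n t02 \<Rightarrow> 'n t02" where
  "Kdef \<xi> g = lie02 \<xi> g"

definition Sigma1 :: "'n::finite vf \<Rightarrow> 'n t02 \<Rightarrow> 'n t12" where
  "Sigma1 \<xi> g \<alpha> \<mu> \<nu> x = (1/2) * (\<Sum>\<beta>\<in>UNIV. ginv g \<alpha> \<beta> x *
      (cov02 g (Kdef \<xi> g) \<mu> \<nu> \<beta> x + cov02 g (Kdef \<xi> g) \<nu> \<mu> \<beta> x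
       - cov02 g (Kdef \<xi> g) \<beta> \<mu> \<nu> x))"

definition SigmaK :: "nat \<Rightarrow> 'n::finite vf \<Rightarrow> 'n t02 \<Rightarrow> 'n t12" where
  "SigmaK k \<xi> g = (lie12 \<xi> ^^ (k - 1)) (Sigma1 \<xi> g)"

definition Hdelta :: "'n \<Rightarrow> 'n \<Rightarrow> 'n \<Rightarrow> 'n \<Rightarrow> real" where
  "Hdelta \<gamma> \<rho> \<nu> \<beta> = (if \<gamma> = \<nu> \<and> \<rho> = \<beta> then 1 else 0) - (if \<gamma> = \<beta> \<and> \<rho> = \<nu> then 1 else 0)"

definition bracketTerm :: "nat \<Rightarrow> 'n::finite vf \<Rightarrow> 'n t02 \<Rightarrow> 'n \<Rightarrow> 'n \<Rightarrow> 'n \<Rightarrow> 'n \<Rightarrow> real^'n \<Rightarrow> real" where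
  "bracketTerm m \<xi> g \<gamma> \<mu> \<alpha> \<rho> x = cov12 g (SigmaK m \<xi> g) \<gamma> \<mu> \<alpha> \<rho> x
     + (\<Sum>k=0..m-2. of_nat (m choose (k+1)) *
          (\<Sum>\<sigma>\<in>UNIV. SigmaK (m-k-1) \<xi> g \<sigma> \<alpha> \<rho> x * SigmaK (k+1) \<xi> g \<mu> \<sigma> \<gamma> x))"

end

theory Submission
  imports Defs
begin

text \<open>The tensor \<Sigma> = L_\<xi>\<nabla> is the Lie derivative of the Levi-Civita connection; in coordinates
  \<Sigma>^a_bc = (L_\<xi>\<Gamma>)^a_bc + \<partial>_b \<partial>_c \<xi>^a, where L_\<xi>\<Gamma> treats \<Gamma> as a (1,2) array. Since
  R^\<mu>_\<alpha>\<nu>\<beta> = \<partial>_\<nu>\<Gamma>^\<mu>_\<beta>\<alpha> + \<Gamma>^\<mu>_\<nu>\<lambda> \<Gamma>^\<lambda>_\<beta>\<alpha> - (\<nu> \<leftrightarrow> \<beta>) and L_\<xi> is a derivation which commutes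
  with \<partial> up to second derivatives of \<xi>, one gets the Palatini identity
  L_\<xi>R^\<mu>_\<alpha>\<nu>\<beta> = \<nabla>_\<nu>\<Sigma>^\<mu>_\<alpha>\<beta> - \<nabla>_\<beta>\<Sigma>^\<mu>_\<alpha>\<nu>. The same computation shows that for every
  S symmetric in its lower indices, the Lie derivative of \<nabla>_\<nu>S^\<mu>_\<alpha>\<beta> - \<nabla>_\<beta>S^\<mu>_\<alpha>\<nu> is the same
  expression for L_\<xi>S plus S^\<sigma>_\<alpha>\<beta> \<Sigma>^\<mu>_\<sigma>\<nu> + \<Sigma>^\<sigma>_\<alpha>\<beta> S^\<mu>_\<sigma>\<nu> - (\<nu> \<leftrightarrow> \<beta>), and L_\<xi> obeys
  the Leibniz rule on these products. Iterating, Pascal's rule collects the products into the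
  binomial coefficients of the formula. Contraction commutes with L_\<xi>, which gives the Ricci
  version.\<close>

lemma has_real_derivative_along_line:
  assumes "(f has_derivative f') (at z)" and "y + t0 *\<^sub>R e = z"
  shows "((\<lambda>t. f (y + t *\<^sub>R e)) has_real_derivative f' e) (at t0)"
proof -
  have l: "linear f'" using assms(1) has_derivative_linear by blast
  have "((\<lambda>t. y + t *\<^sub>R e) has_derivative (\<lambda>h. h *\<^sub>R e)) (at t0)"
    by (auto intro!: derivative_eq_intros)
  moreover have "(f has_derivative f') (at ((\<lambda>t. y + t *\<^sub>R e) t0))" using assms by simp
  ultimately have "((f \<circ> (\<lambda>t. y + t *\<^sub>R e)) has_derivative (f' \<circ> (\<lambda>h. h *\<^sub>R e))) (at t0)"
    by (rule diff_chain_at)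
  then have "((\<lambda>t. f (y + t *\<^sub>R e)) has_derivative (\<lambda>h. f' (h *\<^sub>R e))) (at t0)"
    by (simp add: o_def)
  then show ?thesis unfolding has_field_derivative_def
    by (rule has_derivative_eq_rhs) (auto simp: linear_cmul[OF l] fun_eq_iff)
qed

lemma pd_eq_derivative:
  assumes "(f has_derivative f') (at z)"
  shows "pd i f z = f' (axis i 1)"
  unfolding pd_def by (rule DERIV_imp_deriv, rule has_real_derivative_along_line[OF assms]) simp

lemma pd_has_real_derivative_along_axis:
  assumes "f differentiable (at (y + t0 *\<^sub>R axis i 1))"
  shows "((\<lambda>t. f (y + t *\<^sub>R axis i 1)) has_real_derivative pd i f (y + t0 *\<^sub>R axis i 1)) (at t0)"
proof -
  obtain f' where f': "(f has_derivative f') (at (y + t0 *\<^sub>R axis i 1))"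
    using assms differentiable_def by blast
  show ?thesis using has_real_derivative_along_line[OF f' refl] pd_eq_derivative[OF f'] by simp
qed

lemma pd_add:
  assumes "f differentiable (at z)" "h differentiable (at z)"
  shows "pd i (\<lambda>y. f y + h y) z = pd i f z + pd i h z"
proof -
  obtain f' h' where a: "(f has_derivative f') (at z)" "(h has_derivative h') (at z)"
    using assms differentiable_def by metis
  show ?thesis
    using pd_eq_derivative[OF has_derivative_add[OF a]] pd_eq_derivative[OF a(1)]
      pd_eq_derivative[OF a(2)] by simp
qed

lemma pd_diff:
  assumes "f differentiable (at z)" "h differentiable (at z)"
  shows "pd i (\<lambda>y. f y - h y) z = pd i f z - pd i h z"
proof -
  obtain f' h' where a: "(f has_derivative f') (at z)" "(h has_derivative h') (at z)"
    using assms differentiable_def by metis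
  show ?thesis
    using pd_eq_derivative[OF has_derivative_diff[OF a]] pd_eq_derivative[OF a(1)]
      pd_eq_derivative[OF a(2)] by simp
qed

lemma pd_mult:
  fixes f h :: "real^'n::finite \<Rightarrow> real"
  assumes "f differentiable (at z)" "h differentiable (at z)"
  shows "pd i (\<lambda>y. f y * h y) z = pd i f z * h z + f z * pd i h z"
proof -
  obtain f' h' where a: "(f has_derivative f') (at z)" "(h has_derivative h') (at z)"
    using assms differentiable_def by metis
  show ?thesis
    using pd_eq_derivative[OF has_derivative_mult[OF a]] pd_eq_derivative[OF a(1)]
      pd_eq_derivative[OF a(2)] by simp
qed

lemma pd_const: "pd i (\<lambda>y. c) z = 0"
proof -
  have "pd i (\<lambda>y. c) z = (\<lambda>h. 0) (axis i 1)" by (rule pd_eq_derivative) (rule has_derivative_const)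
  then show ?thesis by simp
qed

lemma pd_sum:
  fixes f :: "'a \<Rightarrow> real^'n::finite \<Rightarrow> real"
  assumes "\<And>a. a \<in> A \<Longrightarrow> f a differentiable (at z)"
  shows "pd i (\<lambda>y. \<Sum>a\<in>A. f a y) z = (\<Sum>a\<in>A. pd i (f a) z)"
proof -
  have "\<forall>a\<in>A. \<exists>f'. (f a has_derivative f') (at z)" using assms differentiable_def by metis
  then obtain F where F: "\<And>a. a \<in> A \<Longrightarrow> (f a has_derivative F a) (at z)" by metis
  have "((\<lambda>y. \<Sum>a\<in>A. f a y) has_derivative (\<lambda>v. \<Sum>a\<in>A. F a v)) (at z)"
    by (rule has_derivative_sum) (rule F)
  from pd_eq_derivative[OF this] show ?thesis
    using pd_eq_derivative[OF F] by (auto intro: sum.cong)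
qed

lemmas pd_simps = pd_add pd_diff pd_mult pd_sum pd_const

lemma pd_cong_open:
  assumes "open U" "z \<in> U" "\<And>y. y \<in> U \<Longrightarrow> f y = h y"
  shows "pd i f z = pd i h z"
proof -
  obtain r where r: "r > 0" "ball z r \<subseteq> U" using assms(1,2) open_contains_ball by blast
  have "eventually (\<lambda>t. f (z + t *\<^sub>R axis i 1) = h (z + t *\<^sub>R axis i 1)) (nhds (0::real))"
    unfolding eventually_nhds_metric
  proof (intro exI[of _ r] conjI allI impI)
    fix t :: real assume "dist t 0 < r"
    then have "z + t *\<^sub>R axis i 1 \<in> ball z r" by (simp add: dist_norm norm_axis_1)
    then show "f (z + t *\<^sub>R axis i 1) = h (z + t *\<^sub>R axis i 1)" using r assms(3) by blast
  qed (use r in auto)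
  then have "DERIV (\<lambda>t. f (z + t *\<^sub>R axis i 1)) 0 :> D \<longleftrightarrow> DERIV (\<lambda>t. h (z + t *\<^sub>R axis i 1)) 0 :> D"
    for D by (rule DERIV_cong_ev[OF refl _ refl])
  then show ?thesis unfolding pd_def deriv_def by simp
qed

section \<open>Smooth functions on an open set\<close>

lemma Ck_imp_continuous_on: "Ck k U f \<Longrightarrow> continuous_on U f"
proof (cases k)
  case (Suc j)
  assume "Ck k U f"
  then have "\<forall>x\<in>U. f differentiable (at x)" using Suc by simp
  then show ?thesis
    by (meson continuous_at_imp_continuous_on differentiable_imp_continuous_within)
qed simp

lemma Ck_SucD: "Ck (Suc k) U f \<Longrightarrow> Ck k U f"
proof (induction k arbitrary: f)
  case 0 then show ?case using Ck_imp_continuous_on by fastforce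
next
  case (Suc k) then show ?case by simp
qed

lemma Ck_cong_open:
  assumes "open U" "\<And>y. y \<in> U \<Longrightarrow> f y = h y" "Ck k U f"
  shows "Ck k U h"
  using assms(2,3)
proof (induction k arbitrary: f h)
  case 0 then show ?case using continuous_on_cong by (metis Ck.simps(1))
next
  case (Suc k)
  have "h differentiable (at x)" if x: "x \<in> U" for x
  proof -
    obtain f' where "(f has_derivative f') (at x)"
      using Suc.prems x by (auto simp: differentiable_def)
    then have "(h has_derivative f') (at x)"
      by (rule has_derivative_transform_within_open[OF _ assms(1) x]) (use Suc.prems in auto)
    then show ?thesis using differentiable_def by blast
  qed
  moreover have "Ck k U (pd i h)" for i
  proof -
    have "Ck k U (pd i f)" using Suc.prems by simp
    moreover have "\<And>y. y \<in> U \<Longrightarrow> pd i f y = pd i h y"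
      by (rule pd_cong_open[OF assms(1)]) (use Suc.prems in auto)
    ultimately show ?thesis using Suc.IH by blast
  qed
  ultimately show ?case by simp
qed

lemma Ck_const: "Ck k (U :: (real^'n::finite) set) (\<lambda>y. c)"
proof (induction k arbitrary: c)
  case (Suc k)
  have "pd i (\<lambda>y. c) = (\<lambda>y. 0)" for i :: 'n by (rule ext) (rule pd_const)
  then show ?case using Suc.IH[of 0] by simp
qed simp

context
  fixes U :: "(real^'n::finite) set"
  assumes U: "open U"
begin

lemma Ck_add: "Ck k U f \<Longrightarrow> Ck k U h \<Longrightarrow> Ck k U (\<lambda>y. f y + h y)"
proof (induction k arbitrary: f h)
  case 0 then show ?case by (simp add: continuous_on_add)
next
  case (Suc k)
  have "Ck k U (pd i (\<lambda>y. f y + h y))" for i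
  proof -
    have "Ck k U (\<lambda>y. pd i f y + pd i h y)" using Suc by simp
    then show ?thesis by (rule Ck_cong_open[OF U, rotated]) (use Suc.prems in \<open>simp add: pd_add\<close>)
  qed
  then show ?case using Suc.prems by simp
qed

lemma Ck_diff: "Ck k U f \<Longrightarrow> Ck k U h \<Longrightarrow> Ck k U (\<lambda>y. f y - h y)"
proof (induction k arbitrary: f h)
  case 0 then show ?case by (simp add: continuous_on_diff)
next
  case (Suc k)
  have "Ck k U (pd i (\<lambda>y. f y - h y))" for i
  proof -
    have "Ck k U (\<lambda>y. pd i f y - pd i h y)" using Suc by simp
    then show ?thesis by (rule Ck_cong_open[OF U, rotated]) (use Suc.prems in \<open>simp add: pd_diff\<close>)
  qed
  then show ?case using Suc.prems by simp
qed

lemma Ck_mult: "Ck k U f \<Longrightarrow> Ck k U h \<Longrightarrow> Ck k U (\<lambda>y. f y * h y)"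
proof (induction k arbitrary: f h)
  case 0 then show ?case by (simp add: continuous_on_mult)
next
  case (Suc k)
  have "Ck k U (pd i (\<lambda>y. f y * h y))" for i
  proof -
    have "Ck k U f" "Ck k U h" using Suc.prems Ck_SucD by blast+
    then have "Ck k U (\<lambda>y. pd i f y * h y)" "Ck k U (\<lambda>y. f y * pd i h y)" using Suc by simp_all
    then have "Ck k U (\<lambda>y. pd i f y * h y + f y * pd i h y)" by (rule Ck_add)
    then show ?thesis by (rule Ck_cong_open[OF U, rotated]) (use Suc.prems in \<open>simp add: pd_mult\<close>)
  qed
  then show ?case using Suc.prems by simp
qed

lemma Ck_sum: "finite A \<Longrightarrow> (\<And>a. a \<in> A \<Longrightarrow> Ck k U (f a)) \<Longrightarrow> Ck k U (\<lambda>y. \<Sum>a\<in>A. f a y)"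
  by (induction A rule: finite_induct) (simp_all add: Ck_const Ck_add)

lemma Ck_prod: "finite A \<Longrightarrow> (\<And>a. a \<in> A \<Longrightarrow> Ck k U (f a)) \<Longrightarrow> Ck k U (\<lambda>y. \<Prod>a\<in>A. f a y)"
  by (induction A rule: finite_induct) (simp_all add: Ck_const Ck_mult)

lemma Ck_inverse: "Ck k U f \<Longrightarrow> (\<And>y. y \<in> U \<Longrightarrow> f y \<noteq> 0) \<Longrightarrow> Ck k U (\<lambda>y. inverse (f y))"
proof (induction k arbitrary: f)
  case 0 then show ?case by (simp add: continuous_on_inverse)
next
  case (Suc k)
  have "(\<lambda>y. inverse (f y)) differentiable (at y) \<and>
      pd i (\<lambda>y. inverse (f y)) y = - (inverse (f y) * pd i f y * inverse (f y))"
    if y: "y \<in> U" for i y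
  proof -
    obtain f' where f': "(f has_derivative f') (at y)"
      using Suc.prems y by (auto simp: differentiable_def)
    note inv = Deriv.has_derivative_inverse[OF Suc.prems(2)[OF y] f']
    show ?thesis using pd_eq_derivative[OF inv] pd_eq_derivative[OF f'] differentiableI[OF inv] by simp
  qed
  then have "\<forall>y\<in>U. (\<lambda>y. inverse (f y)) differentiable (at y)"
    and pd_inverse: "\<And>i y. y \<in> U \<Longrightarrow> pd i (\<lambda>y. inverse (f y)) y = - (inverse (f y) * pd i f y * inverse (f y))"
    by simp_all
  moreover have "Ck k U (pd i (\<lambda>y. inverse (f y)))" for i
  proof -
    have fk: "Ck k U f" using Suc.prems Ck_SucD by blast
    have ik: "Ck k U (\<lambda>y. inverse (f y))" using Suc.IH[OF fk] Suc.prems by blast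
    have "Ck k U (\<lambda>y. inverse (f y) * pd i f y * inverse (f y))"
      using Ck_mult[OF Ck_mult[OF ik] ik] Suc.prems by simp
    then have "Ck k U (\<lambda>y. 0 - inverse (f y) * pd i f y * inverse (f y))"
      using Ck_diff[OF Ck_const] by blast
    then show ?thesis by (rule Ck_cong_open[OF U, rotated]) (simp add: pd_inverse)
  qed
  ultimately show ?case by simp
qed

end

lemma norm_axis_combination_le:
  "norm (s *\<^sub>R axis i 1 + t *\<^sub>R axis j 1 :: real^'n::finite) \<le> \<bar>s\<bar> + \<bar>t\<bar>"
  using norm_triangle_ineq[of "s *\<^sub>R axis i (1::real)" "t *\<^sub>R axis j 1"] by (simp add: norm_axis_1)

lemma second_difference_eq_pd2:
  fixes f :: "real^'n::finite \<Rightarrow> real"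
  assumes B: "ball x r \<subseteq> U" and f: "Ck 2 U f" and h: "0 < h" "2 * h < r"
  shows "\<exists>p. dist p x < 2 * h \<and>
    f (x + h *\<^sub>R axis i 1 + h *\<^sub>R axis j 1) - f (x + h *\<^sub>R axis i 1) - f (x + h *\<^sub>R axis j 1) + f x
    = h * h * pd j (pd i f) p"
proof -
  let ?a = "axis i (1::real) :: real^'n" and ?b = "axis j (1::real) :: real^'n"
  have inU: "x + s *\<^sub>R ?a + t *\<^sub>R ?b \<in> U" if "\<bar>s\<bar> \<le> h" "\<bar>t\<bar> \<le> h" for s t
  proof -
    have "dist (x + s *\<^sub>R ?a + t *\<^sub>R ?b) x < r"
      using norm_axis_combination_le[of s i t j] that h by (simp add: dist_norm add.assoc)
    then show ?thesis using B by (auto simp: dist_commute)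
  qed
  have fd: "\<And>y. y \<in> U \<Longrightarrow> f differentiable (at y)"
    and fid: "\<And>y. y \<in> U \<Longrightarrow> pd i f differentiable (at y)"
    using f by (simp_all add: numeral_2_eq_2)
  define u where "u s = f (x + h *\<^sub>R ?b + s *\<^sub>R ?a) - f (x + s *\<^sub>R ?a)" for s
  define u' where "u' s = pd i f (x + h *\<^sub>R ?b + s *\<^sub>R ?a) - pd i f (x + s *\<^sub>R ?a)" for s
  have "\<exists>z. 0 < z \<and> z < h \<and> u h - u 0 = (h - 0) * u' z"
  proof (rule MVT2[OF h(1)])
    fix s assume s: "0 \<le> s" "s \<le> h"
    have "x + h *\<^sub>R ?b + s *\<^sub>R ?a \<in> U" "x + s *\<^sub>R ?a \<in> U"
      using inU[of s h] inU[of s 0] s h by (simp_all add: algebra_simps)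
    then show "DERIV u s :> u' s" unfolding u_def[abs_def] u'_def
      by (intro DERIV_diff pd_has_real_derivative_along_axis fd)
  qed
  then obtain s1 where s1: "0 < s1" "s1 < h" "u h - u 0 = h * u' s1" by auto
  define v where "v t = pd i f (x + s1 *\<^sub>R ?a + t *\<^sub>R ?b)" for t
  have "\<exists>z. 0 < z \<and> z < h \<and> v h - v 0 = (h - 0) * pd j (pd i f) (x + s1 *\<^sub>R ?a + z *\<^sub>R ?b)"
  proof (rule MVT2[OF h(1)])
    fix t assume t: "0 \<le> t" "t \<le> h"
    have "x + s1 *\<^sub>R ?a + t *\<^sub>R ?b \<in> U" using inU[of s1 t] s1 t by simp
    then show "DERIV v t :> pd j (pd i f) (x + s1 *\<^sub>R ?a + t *\<^sub>R ?b)" unfolding v_def[abs_def]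
      by (intro pd_has_real_derivative_along_axis fid)
  qed
  then obtain t1 where t1: "0 < t1" "t1 < h"
    "v h - v 0 = h * pd j (pd i f) (x + s1 *\<^sub>R ?a + t1 *\<^sub>R ?b)" by auto
  have "u' s1 = v h - v 0" unfolding u'_def v_def by (simp add: algebra_simps)
  have "dist (x + s1 *\<^sub>R ?a + t1 *\<^sub>R ?b) x < 2 * h"
    using norm_axis_combination_le[of s1 i t1 j] s1 t1 by (simp add: dist_norm add.assoc)
  moreover have "f (x + h *\<^sub>R ?a + h *\<^sub>R ?b) - f (x + h *\<^sub>R ?a) - f (x + h *\<^sub>R ?b) + f x = u h - u 0"
    unfolding u_def by (simp add: algebra_simps)
  ultimately show ?thesis using s1(3) t1(3) \<open>u' s1 = v h - v 0\<close> by auto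
qed

lemma pd_commute_Ck2:
  fixes f :: "real^'n::finite \<Rightarrow> real"
  assumes U: "open U" and f: "Ck 2 U f" and x: "x \<in> U"
  shows "pd i (pd j f) x = pd j (pd i f) x"
proof (rule ccontr)
  assume ne: "pd i (pd j f) x \<noteq> pd j (pd i f) x"
  define F1 where "F1 = pd j (pd i f)"
  define F2 where "F2 = pd i (pd j f)"
  define e where "e = \<bar>F1 x - F2 x\<bar> / 2"
  have e: "e > 0" using ne unfolding e_def F1_def F2_def by simp
  obtain r where r: "r > 0" "ball x r \<subseteq> U" using U x open_contains_ball by blast
  have "Ck 0 U F1" "Ck 0 U F2" using f unfolding F1_def F2_def by (simp_all add: numeral_2_eq_2)
  then have "isCont F1 x" "isCont F2 x" using U x continuous_on_eq_continuous_at by auto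
  then obtain d1 d2 where d: "d1 > 0" "\<And>y. dist y x < d1 \<Longrightarrow> dist (F1 y) (F1 x) < e"
     "d2 > 0" "\<And>y. dist y x < d2 \<Longrightarrow> dist (F2 y) (F2 x) < e"
    using e unfolding continuous_at_eps_delta by metis
  define h where "h = min r (min d1 d2) / 4"
  have h: "0 < h" "2 * h < r" "2 * h < d1" "2 * h < d2" using r d unfolding h_def by auto
  obtain p where p: "dist p x < 2 * h"
    "f (x + h *\<^sub>R axis i 1 + h *\<^sub>R axis j 1) - f (x + h *\<^sub>R axis i 1) - f (x + h *\<^sub>R axis j 1) + f x
      = h * h * F1 p"
    using second_difference_eq_pd2[OF r(2) f h(1,2), of i j] unfolding F1_def by blast
  obtain q where q: "dist q x < 2 * h"
    "f (x + h *\<^sub>R axis j 1 + h *\<^sub>R axis i 1) - f (x + h *\<^sub>R axis j 1) - f (x + h *\<^sub>R axis i 1) + f x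
      = h * h * F2 q"
    using second_difference_eq_pd2[OF r(2) f h(1,2), of j i] unfolding F2_def by blast
  have "F1 p = F2 q" using p(2) q(2) h by (simp add: algebra_simps)
  moreover have "dist (F1 p) (F1 x) < e" "dist (F2 q) (F2 x) < e" using d p(1) q(1) h by auto
  ultimately have "\<bar>F1 x - F2 x\<bar> < 2 * e" by (simp add: dist_real_def)
  then show False unfolding e_def by simp
qed

lemma coord_smooth_const: "coord_smooth (U :: (real^'n::finite) set) (\<lambda>y. c)"
  unfolding coord_smooth_def using Ck_const by blast

lemma coord_smooth_add:
  "open U \<Longrightarrow> coord_smooth U f \<Longrightarrow> coord_smooth U h \<Longrightarrow> coord_smooth U (\<lambda>y. f y + h y)"
  unfolding coord_smooth_def using Ck_add by blast

lemma coord_smooth_diff: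
  "open U \<Longrightarrow> coord_smooth U f \<Longrightarrow> coord_smooth U h \<Longrightarrow> coord_smooth U (\<lambda>y. f y - h y)"
  unfolding coord_smooth_def using Ck_diff by blast

lemma coord_smooth_mult:
  "open U \<Longrightarrow> coord_smooth U f \<Longrightarrow> coord_smooth U h \<Longrightarrow> coord_smooth U (\<lambda>y. f y * h y)"
  unfolding coord_smooth_def using Ck_mult by blast

lemma coord_smooth_sum:
  "open U \<Longrightarrow> finite A \<Longrightarrow> (\<And>a. a \<in> A \<Longrightarrow> coord_smooth U (f a))
    \<Longrightarrow> coord_smooth U (\<lambda>y. \<Sum>a\<in>A. f a y)"
  unfolding coord_smooth_def using Ck_sum by blast

lemma coord_smooth_prod:
  "open U \<Longrightarrow> finite A \<Longrightarrow> (\<And>a. a \<in> A \<Longrightarrow> coord_smooth U (f a))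
    \<Longrightarrow> coord_smooth U (\<lambda>y. \<Prod>a\<in>A. f a y)"
  unfolding coord_smooth_def using Ck_prod by blast

lemma coord_smooth_inverse:
  "open U \<Longrightarrow> coord_smooth U f \<Longrightarrow> (\<And>y. y \<in> U \<Longrightarrow> f y \<noteq> 0)
    \<Longrightarrow> coord_smooth U (\<lambda>y. inverse (f y))"
  unfolding coord_smooth_def using Ck_inverse by blast

lemma coord_smooth_cong_open:
  "open U \<Longrightarrow> (\<And>y. y \<in> U \<Longrightarrow> f y = h y) \<Longrightarrow> coord_smooth U f \<Longrightarrow> coord_smooth U h"
  unfolding coord_smooth_def using Ck_cong_open by blast

lemma coord_smooth_pd: "coord_smooth U f \<Longrightarrow> coord_smooth U (pd i f)"
  unfolding coord_smooth_def using Ck.simps(2) by blast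

lemma coord_smooth_differentiable: "coord_smooth U f \<Longrightarrow> y \<in> U \<Longrightarrow> f differentiable (at y)"
  unfolding coord_smooth_def using Ck.simps(2) by blast

lemma coord_smooth_pd_commute:
  "open U \<Longrightarrow> coord_smooth U f \<Longrightarrow> y \<in> U \<Longrightarrow> pd i (pd j f) y = pd j (pd i f) y"
  unfolding coord_smooth_def using pd_commute_Ck2 by blast

lemma coord_smooth_if:
  "coord_smooth U f \<Longrightarrow> coord_smooth U h \<Longrightarrow> coord_smooth U (\<lambda>y. if P then f y else h y)"
  by (cases P) auto

lemma coord_smooth_det:
  fixes M :: "'n::finite \<Rightarrow> 'n \<Rightarrow> real^'n \<Rightarrow> real"
  assumes U: "open U" and M: "\<And>r c. coord_smooth U (M r c)"
  shows "coord_smooth U (\<lambda>y. det (\<chi> r c. M r c y))"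
  unfolding det_def
  by (simp, intro coord_smooth_sum[OF U] coord_smooth_mult[OF U] coord_smooth_const
      coord_smooth_prod[OF U] finite_permutations finite M)

locale metric_field_chart =
  fixes U :: "(real^'n::finite) set" and g :: "'n t02" and \<xi> :: "'n vf"
  assumes open_U: "open U" and metric: "semi_riem_metric U g"
    and field_smooth: "\<And>i. coord_smooth U (\<xi> i)"
begin

abbreviation smooth :: "(real^'n \<Rightarrow> real) \<Rightarrow> bool" where "smooth f \<equiv> coord_smooth U f"

lemma g_smooth: "smooth (g a b)"
  using metric unfolding semi_riem_metric_def by blast

lemma g_sym: "g a b = g b a"
  using metric unfolding semi_riem_metric_def by (auto simp: fun_eq_iff)

lemma det_g_nonzero: "y \<in> U \<Longrightarrow> det (\<chi> i j. g i j y) \<noteq> 0"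
  using metric unfolding semi_riem_metric_def by blast

lemma metric_matrix_inverse:
  assumes "y \<in> U"
  shows "(\<chi> i j. g i j y) ** matrix_inv (\<chi> i j. g i j y) = mat 1
    \<and> matrix_inv (\<chi> i j. g i j y) ** (\<chi> i j. g i j y) = mat 1"
proof -
  have "invertible (\<chi> i j. g i j y)" using det_g_nonzero[OF assms] invertible_det_nz by blast
  then show ?thesis unfolding matrix_inv_def invertible_def by (rule someI_ex)
qed

lemma ginv_mult_g: "y \<in> U \<Longrightarrow> (\<Sum>c\<in>UNIV. ginv g a c y * g c b y) = (if a = b then 1 else 0)"
  using metric_matrix_inverse[of y] unfolding ginv_def
  by (auto simp: vec_eq_iff matrix_matrix_mult_def mat_def)

lemma g_mult_ginv: "y \<in> U \<Longrightarrow> (\<Sum>c\<in>UNIV. g a c y * ginv g c b y) = (if a = b then 1 else 0)"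
  using metric_matrix_inverse[of y] unfolding ginv_def
  by (auto simp: vec_eq_iff matrix_matrix_mult_def mat_def)

lemma ginv_eq_cramer:
  assumes y: "y \<in> U"
  shows "ginv g k j y = det (\<chi> r c. if c = k then (if r = j then 1 else 0) else g r c y)
    / det (\<chi> a b. g a b y)"
proof -
  let ?A = "\<chi> a b. g a b y" and ?b = "\<chi> r. if r = j then 1 else (0::real)"
  have "?A *v (\<chi> k. ginv g k j y) = ?b"
    using g_mult_ginv[OF y] by (simp add: vec_eq_iff matrix_vector_mult_def)
  then have "(\<chi> k. ginv g k j y) = (\<chi> k. det (\<chi> r c. if c = k then ?b$r else ?A$r$c) / det ?A)"
    using cramer[OF det_g_nonzero[OF y]] by blast
  then have "(\<chi> k. ginv g k j y) $ k = (\<chi> k. det (\<chi> r c. if c = k then ?b$r else ?A$r$c) / det ?A) $ k"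
    by simp
  moreover have "(\<chi> r c. if c = k then ?b$r else ?A$r$c)
      = (\<chi> r c. if c = k then (if r = j then 1 else 0) else g r c y)"
    by (simp add: vec_eq_iff)
  ultimately show ?thesis by simp
qed

lemma ginv_smooth: "smooth (ginv g k j)"
proof -
  have "smooth (\<lambda>y. det (\<chi> r c. if c = k then (if r = j then 1 else 0) else g r c y)
      * inverse (det (\<chi> a b. g a b y)))"
    by (intro coord_smooth_mult[OF open_U] coord_smooth_det[OF open_U] coord_smooth_inverse[OF open_U])
      (auto simp: g_smooth coord_smooth_const det_g_nonzero intro!: coord_smooth_if)
  then show ?thesis
    by (rule coord_smooth_cong_open[OF open_U, rotated]) (simp add: ginv_eq_cramer divide_inverse)
qed

lemma smooth_add[simp]: "smooth f \<Longrightarrow> smooth h \<Longrightarrow> smooth (\<lambda>y. f y + h y)"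
  using coord_smooth_add[OF open_U] .
lemma smooth_diff[simp]: "smooth f \<Longrightarrow> smooth h \<Longrightarrow> smooth (\<lambda>y. f y - h y)"
  using coord_smooth_diff[OF open_U] .
lemma smooth_mult[simp]: "smooth f \<Longrightarrow> smooth h \<Longrightarrow> smooth (\<lambda>y. f y * h y)"
  using coord_smooth_mult[OF open_U] .
lemma smooth_divide_const[simp]: "smooth f \<Longrightarrow> smooth (\<lambda>y. f y / c)"
  using coord_smooth_mult[OF open_U _ coord_smooth_const, of f "inverse c"] by (simp add: divide_inverse)
lemma smooth_sum[simp]:
  "finite A \<Longrightarrow> (\<And>a. a \<in> A \<Longrightarrow> smooth (f a)) \<Longrightarrow> smooth (\<lambda>y. \<Sum>a\<in>A. f a y)"
  using coord_smooth_sum[OF open_U] .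

lemma smooth_differentiable[simp]: "smooth f \<Longrightarrow> x \<in> U \<Longrightarrow> f differentiable (at x)"
  by (rule coord_smooth_differentiable)

lemmas [simp] = coord_smooth_const coord_smooth_pd field_smooth g_smooth ginv_smooth g_sym

lemma pd_commute: "smooth f \<Longrightarrow> x \<in> U \<Longrightarrow> pd i (pd j f) x = pd j (pd i f) x"
  by (rule coord_smooth_pd_commute[OF open_U])

lemma pd3_commute: "smooth f \<Longrightarrow> x \<in> U \<Longrightarrow> pd a (pd b (pd c f)) x = pd a (pd c (pd b f)) x"
  by (rule pd_cong_open[OF open_U]) (auto intro: pd_commute)

end

lemma double_sum_cong_symmetrized:
  fixes F G :: "'a \<Rightarrow> 'a \<Rightarrow> real"
  assumes "\<And>d l. F d l + F l d = G d l + G l d"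
  shows "(\<Sum>d\<in>A. \<Sum>l\<in>A. F d l) = (\<Sum>d\<in>A. \<Sum>l\<in>A. G d l)"
proof -
  have "2 * (\<Sum>d\<in>A. \<Sum>l\<in>A. F d l) = (\<Sum>d\<in>A. \<Sum>l\<in>A. F d l) + (\<Sum>l\<in>A. \<Sum>d\<in>A. F d l)"
    by (simp add: sum.swap[of F])
  also have "\<dots> = (\<Sum>d\<in>A. \<Sum>l\<in>A. F d l + F l d)" by (simp add: sum.distrib)
  also have "\<dots> = (\<Sum>d\<in>A. \<Sum>l\<in>A. G d l + G l d)" using assms by simp
  also have "\<dots> = (\<Sum>d\<in>A. \<Sum>l\<in>A. G d l) + (\<Sum>l\<in>A. \<Sum>d\<in>A. G d l)" by (simp add: sum.distrib)
  also have "\<dots> = 2 * (\<Sum>d\<in>A. \<Sum>l\<in>A. G d l)" by (simp add: sum.swap[of G])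
  finally show ?thesis by simp
qed

lemma sum_kronecker_mult: "(\<Sum>e\<in>UNIV. (if a = e then 1 else 0) * f e) = (f (a::'a::finite) :: real)"
proof -
  have "(if a = e then 1 else 0) * f e = (if a = e then f e else 0)" for e by simp
  then show ?thesis by (simp add: sum.delta)
qed

lemmas sum_collect_simps = sum_distrib_left sum_distrib_right sum.distrib[symmetric] sum_subtractf[symmetric]

definition smooth12 :: "(real^'n::finite) set \<Rightarrow> 'n t12 \<Rightarrow> bool" where
  "smooth12 U T \<longleftrightarrow> (\<forall>a b c. coord_smooth U (T a b c))"

definition smooth13 :: "(real^'n::finite) set \<Rightarrow> 'n t13 \<Rightarrow> bool" where
  "smooth13 U T \<longleftrightarrow> (\<forall>a b c e. coord_smooth U (T a b c e))"

definition lower_symmetric :: "'n t12 \<Rightarrow> bool" where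
  "lower_symmetric S \<longleftrightarrow> (\<forall>a b c. S a b c = S a c b)"

definition pd_tensor :: "'n::finite t12 \<Rightarrow> 'n t13" where
  "pd_tensor S \<mu> \<alpha> \<nu> \<beta> = pd \<nu> (S \<mu> \<alpha> \<beta>)"

text \<open>For A = \<Gamma> the first three are the connection
  terms of \<nabla>_\<nu> B^\<mu>_\<alpha>\<beta>; ctr_compose A B is the product A^\<sigma>_\<alpha>\<beta> B^\<mu>_\<sigma>\<nu> of the theorem.\<close>

definition ctr_upper :: "'n::finite t12 \<Rightarrow> 'n t12 \<Rightarrow> 'n t13" where
  "ctr_upper A B \<mu> \<alpha> \<nu> \<beta> x = (\<Sum>d\<in>UNIV. A \<mu> \<nu> d x * B d \<alpha> \<beta> x)"

definition ctr_lower1 :: "'n::finite t12 \<Rightarrow> 'n t12 \<Rightarrow> 'n t13" where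
  "ctr_lower1 A B \<mu> \<alpha> \<nu> \<beta> x = (\<Sum>d\<in>UNIV. A d \<nu> \<alpha> x * B \<mu> d \<beta> x)"

definition ctr_lower2 :: "'n::finite t12 \<Rightarrow> 'n t12 \<Rightarrow> 'n t13" where
  "ctr_lower2 A B \<mu> \<alpha> \<nu> \<beta> x = (\<Sum>d\<in>UNIV. A d \<nu> \<beta> x * B \<mu> \<alpha> d x)"

definition ctr_compose :: "'n::finite t12 \<Rightarrow> 'n t12 \<Rightarrow> 'n t13" where
  "ctr_compose A B \<mu> \<alpha> \<nu> \<beta> x = (\<Sum>d\<in>UNIV. A d \<alpha> \<beta> x * B \<mu> d \<nu> x)"

definition hess_field :: "'n::finite vf \<Rightarrow> 'n t12" where
  "hess_field \<xi> a b c = pd b (pd c (\<xi> a))"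

context metric_field_chart
begin

lemma smooth12D[simp]: "smooth12 U T \<Longrightarrow> smooth (T a b c)"
  unfolding smooth12_def by blast
lemma smooth13D[simp]: "smooth13 U T \<Longrightarrow> smooth (T a b c e)"
  unfolding smooth13_def by blast

lemma smooth12_lie12[simp]: "smooth12 U T \<Longrightarrow> smooth12 U (lie12 \<xi> T)"
  unfolding smooth12_def lie12_def[abs_def] by simp
lemma smooth13_lie13[simp]: "smooth13 U T \<Longrightarrow> smooth13 U (lie13 \<xi> T)"
  unfolding smooth13_def lie13_def[abs_def] by simp

lemma smooth13_add[simp]:
  "smooth13 U X \<Longrightarrow> smooth13 U Y \<Longrightarrow> smooth13 U (\<lambda>a b c e y. X a b c e y + Y a b c e y)"
  unfolding smooth13_def by simp
lemma smooth13_diff[simp]: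
  "smooth13 U X \<Longrightarrow> smooth13 U Y \<Longrightarrow> smooth13 U (\<lambda>a b c e y. X a b c e y - Y a b c e y)"
  unfolding smooth13_def by simp
lemma smooth13_pd_tensor[simp]: "smooth12 U S \<Longrightarrow> smooth13 U (pd_tensor S)"
  unfolding smooth13_def pd_tensor_def by simp
lemma smooth13_ctr[simp]:
  assumes "smooth12 U A" "smooth12 U B"
  shows "smooth13 U (ctr_upper A B)" "smooth13 U (ctr_lower1 A B)"
    "smooth13 U (ctr_lower2 A B)" "smooth13 U (ctr_compose A B)"
  using assms unfolding smooth13_def ctr_upper_def[abs_def] ctr_lower1_def[abs_def]
    ctr_lower2_def[abs_def] ctr_compose_def[abs_def] by simp_all

lemma lower_symmetric_lie12: "lower_symmetric T \<Longrightarrow> lower_symmetric (lie12 \<xi> T)"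
  unfolding lower_symmetric_def lie12_def[abs_def] by (simp add: algebra_simps)

lemma lie13_cong:
  assumes "\<And>a b c e y. y \<in> U \<Longrightarrow> X a b c e y = Y a b c e y" and x: "x \<in> U"
  shows "lie13 \<xi> X \<mu> \<alpha> \<nu> \<beta> x = lie13 \<xi> Y \<mu> \<alpha> \<nu> \<beta> x"
proof -
  have "pd i (X a b c e) x = pd i (Y a b c e) x" for i a b c e
    by (rule pd_cong_open[OF open_U x]) (rule assms(1))
  then show ?thesis unfolding lie13_def using assms by simp
qed

lemma lie02_cong:
  assumes "\<And>a b y. y \<in> U \<Longrightarrow> X a b y = Y a b y" and x: "x \<in> U"
  shows "lie02 \<xi> X \<alpha> \<beta> x = lie02 \<xi> Y \<alpha> \<beta> x"
proof -
  have "pd i (X a b) x = pd i (Y a b) x" for i a b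
    by (rule pd_cong_open[OF open_U x]) (rule assms(1))
  then show ?thesis unfolding lie02_def using assms by simp
qed

lemma lie13_add:
  assumes "smooth13 U X" "smooth13 U Y" "x \<in> U"
  shows "lie13 \<xi> (\<lambda>a b c e y. X a b c e y + Y a b c e y) \<mu> \<alpha> \<nu> \<beta> x
    = lie13 \<xi> X \<mu> \<alpha> \<nu> \<beta> x + lie13 \<xi> Y \<mu> \<alpha> \<nu> \<beta> x"
  by (simp add: assms lie13_def pd_simps sum.distrib sum_subtractf algebra_simps)

lemma lie13_diff:
  assumes "smooth13 U X" "smooth13 U Y" "x \<in> U"
  shows "lie13 \<xi> (\<lambda>a b c e y. X a b c e y - Y a b c e y) \<mu> \<alpha> \<nu> \<beta> x
    = lie13 \<xi> X \<mu> \<alpha> \<nu> \<beta> x - lie13 \<xi> Y \<mu> \<alpha> \<nu> \<beta> x"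
  by (simp add: assms lie13_def pd_simps sum.distrib sum_subtractf algebra_simps)

lemma lie13_lincomb:
  assumes "finite J" "\<And>j. j \<in> J \<Longrightarrow> smooth13 U (X j)" "x \<in> U"
  shows "lie13 \<xi> (\<lambda>a b c e y. \<Sum>j\<in>J. w j * X j a b c e y) \<mu> \<alpha> \<nu> \<beta> x
    = (\<Sum>j\<in>J. w j * lie13 \<xi> (X j) \<mu> \<alpha> \<nu> \<beta> x)"
  by (simp add: assms lie13_def pd_simps, simp add: sum_collect_simps, rule trans[OF sum.swap],
      (rule sum.cong[OF refl])+, simp add: algebra_simps)

lemma lie13_antisymmetrize:
  assumes "smooth13 U X" "x \<in> U"
  shows "lie13 \<xi> (\<lambda>\<mu> \<alpha> \<nu> \<beta> y. X \<mu> \<alpha> \<nu> \<beta> y - X \<mu> \<alpha> \<beta> \<nu> y) \<mu> \<alpha> \<nu> \<beta> x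
    = lie13 \<xi> X \<mu> \<alpha> \<nu> \<beta> x - lie13 \<xi> X \<mu> \<alpha> \<beta> \<nu> x"
  by (simp add: assms lie13_def pd_simps sum_subtractf algebra_simps)

lemma lie13_pd_tensor:
  assumes "smooth12 U S" "x \<in> U"
  shows "lie13 \<xi> (pd_tensor S) \<mu> \<alpha> \<nu> \<beta> x = pd_tensor (lie12 \<xi> S) \<mu> \<alpha> \<nu> \<beta> x
     + ctr_upper (hess_field \<xi>) S \<mu> \<alpha> \<nu> \<beta> x - ctr_lower1 (hess_field \<xi>) S \<mu> \<alpha> \<nu> \<beta> x
     - ctr_lower2 (hess_field \<xi>) S \<mu> \<alpha> \<nu> \<beta> x"
  by (simp add: assms lie13_def pd_tensor_def lie12_def[abs_def] ctr_upper_def ctr_lower1_def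
      ctr_lower2_def hess_field_def pd_simps,
      simp add: assms pd_commute, simp add: sum.distrib[symmetric] sum_subtractf[symmetric],
      rule sum.cong[OF refl], simp add: algebra_simps)

lemma lie13_ctr:
  assumes "smooth12 U A" "smooth12 U B" "x \<in> U"
  shows "lie13 \<xi> (ctr_upper A B) \<mu> \<alpha> \<nu> \<beta> x
      = ctr_upper (lie12 \<xi> A) B \<mu> \<alpha> \<nu> \<beta> x + ctr_upper A (lie12 \<xi> B) \<mu> \<alpha> \<nu> \<beta> x"
    and "lie13 \<xi> (ctr_lower1 A B) \<mu> \<alpha> \<nu> \<beta> x
      = ctr_lower1 (lie12 \<xi> A) B \<mu> \<alpha> \<nu> \<beta> x + ctr_lower1 A (lie12 \<xi> B) \<mu> \<alpha> \<nu> \<beta> x"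
    and "lie13 \<xi> (ctr_lower2 A B) \<mu> \<alpha> \<nu> \<beta> x
      = ctr_lower2 (lie12 \<xi> A) B \<mu> \<alpha> \<nu> \<beta> x + ctr_lower2 A (lie12 \<xi> B) \<mu> \<alpha> \<nu> \<beta> x"
    and "lie13 \<xi> (ctr_compose A B) \<mu> \<alpha> \<nu> \<beta> x
      = ctr_compose (lie12 \<xi> A) B \<mu> \<alpha> \<nu> \<beta> x + ctr_compose A (lie12 \<xi> B) \<mu> \<alpha> \<nu> \<beta> x"
  by (simp_all add: assms lie13_def lie12_def ctr_upper_def[abs_def] ctr_lower1_def[abs_def]
      ctr_lower2_def[abs_def] ctr_compose_def[abs_def] pd_simps,
      simp_all add: sum_collect_simps, (rule double_sum_cong_symmetrized, simp add: algebra_simps)+)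

lemma lie02_contract:
  assumes "smooth13 U T" "x \<in> U"
  shows "lie02 \<xi> (\<lambda>\<alpha> \<beta> y. \<Sum>\<mu>\<in>UNIV. T \<mu> \<alpha> \<mu> \<beta> y) \<alpha> \<beta> x = (\<Sum>\<mu>\<in>UNIV. lie13 \<xi> T \<mu> \<alpha> \<mu> \<beta> x)"
  by (simp add: assms lie02_def lie13_def pd_simps, simp add: sum_collect_simps,
      rule double_sum_cong_symmetrized, simp add: algebra_simps)

end

section \<open>The Lie derivative of the connection\<close>

definition koszul :: "'n::finite t02 \<Rightarrow> 'n \<Rightarrow> 'n \<Rightarrow> 'n \<Rightarrow> real^'n \<Rightarrow> real" where
  "koszul T d b c y = pd b (T c d) y + pd c (T b d) y - pd d (T b c) y"

text \<open>L_\<xi>\<nabla> in terms of \<Gamma>: lie12 treats \<Gamma> as if it were a tensor, and the second derivatives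
  of \<xi> correct for the fact that it is not.\<close>

definition lie_connection :: "'n::finite vf \<Rightarrow> 'n t02 \<Rightarrow> 'n t12" where
  "lie_connection \<xi> g a b c y = lie12 \<xi> (chris g) a b c y + hess_field \<xi> a b c y"

lemma chris_eq_koszul: "chris g a b c y = (1/2) * (\<Sum>e\<in>UNIV. ginv g a e y * koszul g e b c y)"
  unfolding chris_def koszul_def by simp

context metric_field_chart
begin

lemma chris_sym: "chris g a b c = chris g a c b"
  unfolding chris_def[abs_def] by (simp add: algebra_simps)

lemma smooth12_chris[simp]: "smooth12 U (chris g)"
  unfolding smooth12_def chris_def[abs_def] by simp

lemma lower_symmetric_chris[simp]: "lower_symmetric (chris g)"
  unfolding lower_symmetric_def using chris_sym by blast

lemma lie12_chris_sym: "lie12 \<xi> (chris g) a b c = lie12 \<xi> (chris g) a c b"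
  using lower_symmetric_lie12[OF lower_symmetric_chris] unfolding lower_symmetric_def by blast

lemma cov02_koszul:
  assumes T_sym: "\<And>a b. T a b = T b a"
  shows "cov02 g T b c d x + cov02 g T c b d x - cov02 g T d b c x
    = koszul T d b c x - 2 * (\<Sum>e\<in>UNIV. chris g e b c x * T e d x)"
  unfolding cov02_def koszul_def
  by (simp add: chris_sym T_sym sum.distrib sum_subtractf sum_negf algebra_simps)

lemma smooth_Kdef[simp]: "smooth (Kdef \<xi> g a b)"
  unfolding Kdef_def lie02_def[abs_def] by simp

lemma Kdef_sym: "Kdef \<xi> g a b = Kdef \<xi> g b a"
  unfolding Kdef_def lie02_def[abs_def] by (simp add: algebra_simps)

lemma g_mult_chris:
  assumes y: "y \<in> U"
  shows "(\<Sum>a\<in>UNIV. g d a y * chris g a b c y) = koszul g d b c y / 2"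
proof -
  have "(\<Sum>a\<in>UNIV. g d a y * chris g a b c y)
      = (1/2) * (\<Sum>e\<in>UNIV. \<Sum>a\<in>UNIV. g d a y * ginv g a e y * koszul g e b c y)"
    unfolding chris_eq_koszul
    by (subst sum.swap) (simp add: sum_distrib_left mult.assoc mult.left_commute)
  also have "\<dots> = (1/2) * (\<Sum>e\<in>UNIV. (\<Sum>a\<in>UNIV. g d a y * ginv g a e y) * koszul g e b c y)"
    by (simp add: sum_distrib_right)
  also have "\<dots> = koszul g d b c y / 2"
    unfolding g_mult_ginv[OF y] by (simp add: sum_kronecker_mult)
  finally show ?thesis .
qed

lemma koszul_Kdef:
  assumes x: "x \<in> U"
  shows "koszul (Kdef \<xi> g) d b c x
    = (\<Sum>e\<in>UNIV. \<xi> e x * pd e (koszul g d b c) x) + (\<Sum>e\<in>UNIV. koszul g e b c x * pd d (\<xi> e) x)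
      + (\<Sum>e\<in>UNIV. koszul g d e c x * pd b (\<xi> e) x) + (\<Sum>e\<in>UNIV. koszul g d b e x * pd c (\<xi> e) x)
      + 2 * (\<Sum>e\<in>UNIV. g e d x * hess_field \<xi> e b c x)"
  by (simp add: x Kdef_def lie02_def[abs_def] koszul_def[abs_def] hess_field_def pd_simps,
      simp add: x pd_commute, simp add: sum.distrib sum_subtractf sum_negf algebra_simps)

lemma lie_koszul:
  assumes x: "x \<in> U"
  shows "(\<Sum>e\<in>UNIV. \<xi> e x * pd e (koszul g d b c) x) + (\<Sum>e\<in>UNIV. koszul g e b c x * pd d (\<xi> e) x)
      + (\<Sum>e\<in>UNIV. koszul g d e c x * pd b (\<xi> e) x) + (\<Sum>e\<in>UNIV. koszul g d b e x * pd c (\<xi> e) x)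
    = 2 * ((\<Sum>a\<in>UNIV. Kdef \<xi> g d a x * chris g a b c x)
      + (\<Sum>a\<in>UNIV. g d a x * lie12 \<xi> (chris g) a b c x))"
proof -
  have koszul_eq: "koszul g d b c y = 2 * (\<Sum>a\<in>UNIV. g d a y * chris g a b c y)" if "y \<in> U" for d b c y
    by (simp del: g_sym add: g_mult_chris[OF that])
  have pd_koszul: "pd e (koszul g d b c) x = pd e (\<lambda>y. 2 * (\<Sum>a\<in>UNIV. g d a y * chris g a b c y)) x"
    for e by (rule pd_cong_open[OF open_U x]) (rule koszul_eq)
  show ?thesis
    unfolding pd_koszul koszul_eq[OF x]
    by (simp add: x Kdef_def lie02_def lie12_def pd_simps, simp add: sum_collect_simps,
        rule double_sum_cong_symmetrized, simp add: algebra_simps chris_sym)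
qed

lemma cov02_Kdef_koszul:
  assumes x: "x \<in> U"
  shows "cov02 g (Kdef \<xi> g) b c d x + cov02 g (Kdef \<xi> g) c b d x - cov02 g (Kdef \<xi> g) d b c x
    = 2 * (\<Sum>e\<in>UNIV. g d e x * lie_connection \<xi> g e b c x)"
  unfolding cov02_koszul[OF Kdef_sym] koszul_Kdef[OF x] lie_koszul[OF x] lie_connection_def
  by (simp add: Kdef_sym sum.distrib sum_subtractf sum_negf sum_distrib_left algebra_simps)

lemma Sigma1_eq_lie_connection:
  assumes x: "x \<in> U"
  shows "Sigma1 \<xi> g a b c x = lie_connection \<xi> g a b c x"
proof -
  have "Sigma1 \<xi> g a b c x = (\<Sum>e\<in>UNIV. \<Sum>d\<in>UNIV. ginv g a d x * g d e x * lie_connection \<xi> g e b c x)"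
    unfolding Sigma1_def cov02_Kdef_koszul[OF x]
    by (subst sum.swap) (simp add: sum_distrib_left mult.assoc)
  also have "\<dots> = (\<Sum>e\<in>UNIV. (\<Sum>d\<in>UNIV. ginv g a d x * g d e x) * lie_connection \<xi> g e b c x)"
    by (simp add: sum_distrib_right)
  also have "\<dots> = lie_connection \<xi> g a b c x"
    unfolding ginv_mult_g[OF x] by (simp add: sum_kronecker_mult)
  finally show ?thesis .
qed

end

section \<open>The Lie derivative of the curvature\<close>

definition alt_cov :: "'n::finite t02 \<Rightarrow> 'n t12 \<Rightarrow> 'n t13" where
  "alt_cov g S \<mu> \<alpha> \<nu> \<beta> x = cov12 g S \<nu> \<mu> \<alpha> \<beta> x - cov12 g S \<beta> \<mu> \<alpha> \<nu> x"

definition alt_compose :: "'n::finite t12 \<Rightarrow> 'n t12 \<Rightarrow> 'n t13" where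
  "alt_compose A B \<mu> \<alpha> \<nu> \<beta> x = ctr_compose A B \<mu> \<alpha> \<nu> \<beta> x - ctr_compose A B \<mu> \<alpha> \<beta> \<nu> x"

lemma cov12_eq_ctr:
  "cov12 g S \<nu> \<mu> \<alpha> \<beta> x = pd_tensor S \<mu> \<alpha> \<nu> \<beta> x + ctr_upper (chris g) S \<mu> \<alpha> \<nu> \<beta> x
    - ctr_lower1 (chris g) S \<mu> \<alpha> \<nu> \<beta> x - ctr_lower2 (chris g) S \<mu> \<alpha> \<nu> \<beta> x"
  by (simp add: cov12_def pd_tensor_def ctr_upper_def ctr_lower1_def ctr_lower2_def)

context metric_field_chart
begin

lemma riem_eq_alt_chris:
  "riem g \<mu> \<alpha> \<nu> \<beta> y = (pd_tensor (chris g) \<mu> \<alpha> \<nu> \<beta> y + ctr_upper (chris g) (chris g) \<mu> \<alpha> \<nu> \<beta> y)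
     - (pd_tensor (chris g) \<mu> \<alpha> \<beta> \<nu> y + ctr_upper (chris g) (chris g) \<mu> \<alpha> \<beta> \<nu> y)"
  unfolding riem_def pd_tensor_def ctr_upper_def by (simp add: chris_sym algebra_simps)

lemma smooth13_riem[simp]: "smooth13 U (riem g)"
  unfolding smooth13_def riem_def[abs_def] by simp

lemma smooth13_alt_cov[simp]: "smooth12 U S \<Longrightarrow> smooth13 U (alt_cov g S)"
  unfolding smooth13_def alt_cov_def[abs_def] cov12_def by simp

lemma smooth13_alt_compose[simp]: "smooth12 U A \<Longrightarrow> smooth12 U B \<Longrightarrow> smooth13 U (alt_compose A B)"
  unfolding smooth13_def alt_compose_def[abs_def] ctr_compose_def by simp

lemma alt_cov_cong:
  assumes "\<And>a b c y. y \<in> U \<Longrightarrow> S a b c y = S' a b c y" and x: "x \<in> U"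
  shows "alt_cov g S \<mu> \<alpha> \<nu> \<beta> x = alt_cov g S' \<mu> \<alpha> \<nu> \<beta> x"
proof -
  have "pd i (S a b c) x = pd i (S' a b c) x" for i a b c
    by (rule pd_cong_open[OF open_U x]) (rule assms(1))
  then show ?thesis unfolding alt_cov_def cov12_def using assms by simp
qed

lemma lie13_riem:
  assumes x: "x \<in> U"
  shows "lie13 \<xi> (riem g) \<mu> \<alpha> \<nu> \<beta> x = alt_cov g (lie_connection \<xi> g) \<mu> \<alpha> \<nu> \<beta> x"
proof -
  define E where "E \<mu> \<alpha> \<nu> \<beta> y = pd_tensor (chris g) \<mu> \<alpha> \<nu> \<beta> y + ctr_upper (chris g) (chris g) \<mu> \<alpha> \<nu> \<beta> y"
    for \<mu> \<alpha> \<nu> \<beta> y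
  have E: "smooth13 U E" unfolding E_def[abs_def] by simp
  have lie_E: "lie13 \<xi> E \<mu> \<alpha> \<nu> \<beta> x = pd_tensor (lie12 \<xi> (chris g)) \<mu> \<alpha> \<nu> \<beta> x
     + ctr_upper (hess_field \<xi>) (chris g) \<mu> \<alpha> \<nu> \<beta> x - ctr_lower1 (hess_field \<xi>) (chris g) \<mu> \<alpha> \<nu> \<beta> x
     - ctr_lower2 (hess_field \<xi>) (chris g) \<mu> \<alpha> \<nu> \<beta> x
     + (ctr_upper (lie12 \<xi> (chris g)) (chris g) \<mu> \<alpha> \<nu> \<beta> x
        + ctr_upper (chris g) (lie12 \<xi> (chris g)) \<mu> \<alpha> \<nu> \<beta> x)" for \<mu> \<alpha> \<nu> \<beta>
    unfolding E_def[abs_def] using x by (simp add: lie13_add lie13_pd_tensor lie13_ctr)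
  have "riem g = (\<lambda>\<mu> \<alpha> \<nu> \<beta> y. E \<mu> \<alpha> \<nu> \<beta> y - E \<mu> \<alpha> \<beta> \<nu> y)"
    unfolding E_def by (simp add: fun_eq_iff riem_eq_alt_chris)
  then have "lie13 \<xi> (riem g) \<mu> \<alpha> \<nu> \<beta> x = lie13 \<xi> E \<mu> \<alpha> \<nu> \<beta> x - lie13 \<xi> E \<mu> \<alpha> \<beta> \<nu> x"
    using lie13_antisymmetrize[OF E x] by simp
  also have "\<dots> = alt_cov g (lie_connection \<xi> g) \<mu> \<alpha> \<nu> \<beta> x"
    unfolding lie_E using x
    by (simp add: alt_cov_def cov12_def lie_connection_def[abs_def] pd_tensor_def ctr_upper_def
        ctr_lower1_def ctr_lower2_def hess_field_def pd_simps,
        simp add: pd_commute pd3_commute chris_sym lie12_chris_sym,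
        simp add: sum.distrib sum_subtractf sum_distrib_left sum_distrib_right sum_negf algebra_simps)
  finally show ?thesis .
qed

lemma lie13_cov12:
  assumes S: "smooth12 U S" and x: "x \<in> U"
  shows "lie13 \<xi> (\<lambda>\<mu> \<alpha> \<nu> \<beta>. cov12 g S \<nu> \<mu> \<alpha> \<beta>) \<mu> \<alpha> \<nu> \<beta> x = pd_tensor (lie12 \<xi> S) \<mu> \<alpha> \<nu> \<beta> x
     + ctr_upper (hess_field \<xi>) S \<mu> \<alpha> \<nu> \<beta> x - ctr_lower1 (hess_field \<xi>) S \<mu> \<alpha> \<nu> \<beta> x
     - ctr_lower2 (hess_field \<xi>) S \<mu> \<alpha> \<nu> \<beta> x
     + (ctr_upper (lie12 \<xi> (chris g)) S \<mu> \<alpha> \<nu> \<beta> x + ctr_upper (chris g) (lie12 \<xi> S) \<mu> \<alpha> \<nu> \<beta> x)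
     - (ctr_lower1 (lie12 \<xi> (chris g)) S \<mu> \<alpha> \<nu> \<beta> x + ctr_lower1 (chris g) (lie12 \<xi> S) \<mu> \<alpha> \<nu> \<beta> x)
     - (ctr_lower2 (lie12 \<xi> (chris g)) S \<mu> \<alpha> \<nu> \<beta> x + ctr_lower2 (chris g) (lie12 \<xi> S) \<mu> \<alpha> \<nu> \<beta> x)"
proof -
  have "(\<lambda>\<mu> \<alpha> \<nu> \<beta>. cov12 g S \<nu> \<mu> \<alpha> \<beta>) = (\<lambda>\<mu> \<alpha> \<nu> \<beta> y. pd_tensor S \<mu> \<alpha> \<nu> \<beta> y
      + ctr_upper (chris g) S \<mu> \<alpha> \<nu> \<beta> y - ctr_lower1 (chris g) S \<mu> \<alpha> \<nu> \<beta> y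
      - ctr_lower2 (chris g) S \<mu> \<alpha> \<nu> \<beta> y)"
    by (simp add: fun_eq_iff cov12_eq_ctr)
  then show ?thesis using S x by (simp add: lie13_add lie13_diff lie13_pd_tensor lie13_ctr)
qed

lemma lie13_alt_cov:
  assumes S: "smooth12 U S" and sym: "lower_symmetric S" and x: "x \<in> U"
  shows "lie13 \<xi> (alt_cov g S) \<mu> \<alpha> \<nu> \<beta> x = alt_cov g (lie12 \<xi> S) \<mu> \<alpha> \<nu> \<beta> x
    + alt_compose S (lie_connection \<xi> g) \<mu> \<alpha> \<nu> \<beta> x + alt_compose (lie_connection \<xi> g) S \<mu> \<alpha> \<nu> \<beta> x"
proof -
  have S_sym: "S a b c = S a c b" for a b c
    using sym unfolding lower_symmetric_def by blast
  have lie_S_sym: "lie12 \<xi> S a b c = lie12 \<xi> S a c b" for a b c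
    using lower_symmetric_lie12[OF sym] unfolding lower_symmetric_def by blast
  have "smooth13 U (\<lambda>\<mu> \<alpha> \<nu> \<beta>. cov12 g S \<nu> \<mu> \<alpha> \<beta>)"
    using S unfolding smooth13_def cov12_def[abs_def] by simp
  moreover have "alt_cov g S = (\<lambda>\<mu> \<alpha> \<nu> \<beta> y. cov12 g S \<nu> \<mu> \<alpha> \<beta> y - cov12 g S \<beta> \<mu> \<alpha> \<nu> y)"
    by (simp add: fun_eq_iff alt_cov_def)
  ultimately have "lie13 \<xi> (alt_cov g S) \<mu> \<alpha> \<nu> \<beta> x
      = lie13 \<xi> (\<lambda>\<mu> \<alpha> \<nu> \<beta>. cov12 g S \<nu> \<mu> \<alpha> \<beta>) \<mu> \<alpha> \<nu> \<beta> x
        - lie13 \<xi> (\<lambda>\<mu> \<alpha> \<nu> \<beta>. cov12 g S \<nu> \<mu> \<alpha> \<beta>) \<mu> \<alpha> \<beta> \<nu> x"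
    using lie13_antisymmetrize[OF _ x] by simp
  also have "\<dots> = alt_cov g (lie12 \<xi> S) \<mu> \<alpha> \<nu> \<beta> x
    + alt_compose S (lie_connection \<xi> g) \<mu> \<alpha> \<nu> \<beta> x + alt_compose (lie_connection \<xi> g) S \<mu> \<alpha> \<nu> \<beta> x"
    unfolding lie13_cov12[OF S x] using x
    by (simp add: alt_cov_def alt_compose_def cov12_def lie_connection_def pd_tensor_def ctr_upper_def
        ctr_lower1_def ctr_lower2_def ctr_compose_def hess_field_def,
        simp add: pd_commute chris_sym lie12_chris_sym S_sym lie_S_sym,
        simp add: sum.distrib sum_subtractf sum_distrib_left sum_distrib_right sum_negf algebra_simps)
  finally show ?thesis .
qed

lemma lie13_alt_compose:
  assumes "smooth12 U A" "smooth12 U B" "x \<in> U"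
  shows "lie13 \<xi> (alt_compose A B) \<mu> \<alpha> \<nu> \<beta> x
    = alt_compose (lie12 \<xi> A) B \<mu> \<alpha> \<nu> \<beta> x + alt_compose A (lie12 \<xi> B) \<mu> \<alpha> \<nu> \<beta> x"
proof -
  have "alt_compose A B = (\<lambda>\<mu> \<alpha> \<nu> \<beta> y. ctr_compose A B \<mu> \<alpha> \<nu> \<beta> y - ctr_compose A B \<mu> \<alpha> \<beta> \<nu> y)"
    by (simp add: fun_eq_iff alt_compose_def)
  then show ?thesis
    using assms lie13_antisymmetrize[of "ctr_compose A B"] by (simp add: lie13_ctr alt_compose_def)
qed

end

section \<open>Iterated Lie derivatives\<close>

lemma sum_binomial_pascal:
  fixes f :: "nat \<Rightarrow> nat \<Rightarrow> real"
  shows "(\<Sum>j\<in>{1..n}. real (Suc n choose j) * (f (Suc (Suc n - j)) j + f (Suc n - j) (Suc j)))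
         + f (Suc n) 1 + f 1 (Suc n)
       = (\<Sum>j\<in>{1..Suc n}. real (Suc (Suc n) choose j) * f (Suc (Suc n) - j) j)"
proof -
  have "(\<Sum>j\<in>{1..Suc n}. real (Suc (Suc n) choose j) * f (Suc (Suc n) - j) j)
      = (\<Sum>i\<in>{0..n}. real (Suc (Suc n) choose Suc i) * f (Suc (Suc n) - Suc i) (Suc i))"
    using sum.shift_bounds_cl_Suc_ivl[of "\<lambda>j. real (Suc (Suc n) choose j) * f (Suc (Suc n) - j) j" 0 n]
    by simp
  also have "\<dots> = (\<Sum>i\<in>{0..n}. real (Suc n choose i) * f (Suc n - i) (Suc i))
      + (\<Sum>i\<in>{0..n}. real (Suc n choose Suc i) * f (Suc n - i) (Suc i))"
    by (simp only: binomial_Suc_Suc of_nat_add diff_Suc_Suc distrib_right sum.distrib)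
  also have "(\<Sum>i\<in>{0..n}. real (Suc n choose i) * f (Suc n - i) (Suc i))
      = f (Suc n) 1 + (\<Sum>i\<in>{1..n}. real (Suc n choose i) * f (Suc n - i) (Suc i))"
    by (simp add: sum.atLeast_Suc_atMost[of 0 n])
  also have "(\<Sum>i\<in>{0..n}. real (Suc n choose Suc i) * f (Suc n - i) (Suc i))
      = (\<Sum>j\<in>{1..n}. real (Suc n choose j) * f (Suc (Suc n) - j) j) + f 1 (Suc n)"
    using sum.shift_bounds_cl_Suc_ivl[of "\<lambda>j. real (Suc n choose j) * f (Suc (Suc n) - j) j" 0 n]
    by simp
  finally show ?thesis
    by (simp add: sum.distrib algebra_simps Suc_diff_le)
qed

definition riem_lie_expansion :: "nat \<Rightarrow> 'n::finite vf \<Rightarrow> 'n t02 \<Rightarrow> 'n t13" where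
  "riem_lie_expansion m \<xi> g \<mu> \<alpha> \<nu> \<beta> y = alt_cov g (SigmaK m \<xi> g) \<mu> \<alpha> \<nu> \<beta> y
     + (\<Sum>j\<in>{1..m-1}. real (m choose j) * alt_compose (SigmaK (m-j) \<xi> g) (SigmaK j \<xi> g) \<mu> \<alpha> \<nu> \<beta> y)"

lemma SigmaK_1: "SigmaK 1 \<xi> g = Sigma1 \<xi> g"
  unfolding SigmaK_def by simp

lemma SigmaK_Suc: "k \<ge> 1 \<Longrightarrow> SigmaK (Suc k) \<xi> g = lie12 \<xi> (SigmaK k \<xi> g)"
  unfolding SigmaK_def by (cases k) auto

context metric_field_chart
begin

lemma smooth12_SigmaK[simp]: "smooth12 U (SigmaK k \<xi> g)"
proof -
  have "smooth12 U (Sigma1 \<xi> g)"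
    unfolding smooth12_def Sigma1_def[abs_def] cov02_def by simp
  then have "smooth12 U ((lie12 \<xi> ^^ n) (Sigma1 \<xi> g))" for n
    by (induction n) auto
  then show ?thesis unfolding SigmaK_def by blast
qed

lemma lower_symmetric_SigmaK: "lower_symmetric (SigmaK k \<xi> g)"
proof -
  have "lower_symmetric (Sigma1 \<xi> g)"
    unfolding lower_symmetric_def Sigma1_def[abs_def] cov02_def
    by (simp add: Kdef_sym chris_sym algebra_simps)
  then have "lower_symmetric ((lie12 \<xi> ^^ n) (Sigma1 \<xi> g))" for n
    by (induction n) (auto intro: lower_symmetric_lie12)
  then show ?thesis unfolding SigmaK_def by blast
qed

lemma alt_compose_lie_connection:
  assumes "x \<in> U"
  shows "alt_compose A (lie_connection \<xi> g) \<mu> \<alpha> \<nu> \<beta> x = alt_compose A (SigmaK 1 \<xi> g) \<mu> \<alpha> \<nu> \<beta> x"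
    and "alt_compose (lie_connection \<xi> g) A \<mu> \<alpha> \<nu> \<beta> x = alt_compose (SigmaK 1 \<xi> g) A \<mu> \<alpha> \<nu> \<beta> x"
  unfolding alt_compose_def ctr_compose_def SigmaK_1
  by (simp_all add: assms Sigma1_eq_lie_connection)

lemma lie13_riem_lie_expansion:
  assumes m: "m \<ge> 1" and x: "x \<in> U"
  shows "lie13 \<xi> (riem_lie_expansion m \<xi> g) \<mu> \<alpha> \<nu> \<beta> x = riem_lie_expansion (Suc m) \<xi> g \<mu> \<alpha> \<nu> \<beta> x"
proof -
  let ?P = "\<lambda>a b. alt_compose (SigmaK a \<xi> g) (SigmaK b \<xi> g) \<mu> \<alpha> \<nu> \<beta> x"
  have lie_P: "lie13 \<xi> (alt_compose (SigmaK (m-j) \<xi> g) (SigmaK j \<xi> g)) \<mu> \<alpha> \<nu> \<beta> x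
      = ?P (Suc (m-j)) j + ?P (m-j) (Suc j)" if "j \<in> {1..m-1}" for j
  proof -
    have "1 \<le> m - j" "1 \<le> j" using that by auto
    then show ?thesis using x by (simp add: lie13_alt_compose SigmaK_Suc)
  qed
  have "smooth13 U (\<lambda>\<mu> \<alpha> \<nu> \<beta> y. \<Sum>j\<in>{1..m-1}.
      real (m choose j) * alt_compose (SigmaK (m-j) \<xi> g) (SigmaK j \<xi> g) \<mu> \<alpha> \<nu> \<beta> y)"
    unfolding smooth13_def by simp
  then have "lie13 \<xi> (riem_lie_expansion m \<xi> g) \<mu> \<alpha> \<nu> \<beta> x
      = lie13 \<xi> (alt_cov g (SigmaK m \<xi> g)) \<mu> \<alpha> \<nu> \<beta> x
        + (\<Sum>j\<in>{1..m-1}. real (m choose j) * (?P (Suc (m-j)) j + ?P (m-j) (Suc j)))"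
    unfolding riem_lie_expansion_def[abs_def] using x lie_P
    by (simp add: lie13_add lie13_lincomb)
  also have "\<dots> = alt_cov g (SigmaK (Suc m) \<xi> g) \<mu> \<alpha> \<nu> \<beta> x + ?P m 1 + ?P 1 m
        + (\<Sum>j\<in>{1..m-1}. real (m choose j) * (?P (Suc (m-j)) j + ?P (m-j) (Suc j)))"
    using m x
    by (simp add: lie13_alt_cov lower_symmetric_SigmaK SigmaK_Suc alt_compose_lie_connection)
  also have "\<dots> = riem_lie_expansion (Suc m) \<xi> g \<mu> \<alpha> \<nu> \<beta> x"
  proof -
    obtain n where n: "m = Suc n" using m by (cases m) auto
    show ?thesis unfolding riem_lie_expansion_def n
      using sum_binomial_pascal[of n ?P] by (simp add: algebra_simps)
  qed
  finally show ?thesis .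
qed

lemma lie13_pow_riem:
  assumes "m \<ge> 1" and "x \<in> U"
  shows "(lie13 \<xi> ^^ m) (riem g) \<mu> \<alpha> \<nu> \<beta> x = riem_lie_expansion m \<xi> g \<mu> \<alpha> \<nu> \<beta> x"
  using assms
proof (induction m arbitrary: x \<mu> \<alpha> \<nu> \<beta> rule: nat_induct_at_least)
  case base
  have "lie13 \<xi> (riem g) \<mu> \<alpha> \<nu> \<beta> x = alt_cov g (lie_connection \<xi> g) \<mu> \<alpha> \<nu> \<beta> x"
    by (rule lie13_riem[OF base])
  also have "\<dots> = alt_cov g (SigmaK 1 \<xi> g) \<mu> \<alpha> \<nu> \<beta> x"
    unfolding SigmaK_1 by (rule alt_cov_cong[OF _ base]) (simp add: Sigma1_eq_lie_connection)
  finally show ?case unfolding riem_lie_expansion_def by simp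
next
  case (Suc m)
  have "(lie13 \<xi> ^^ Suc m) (riem g) \<mu> \<alpha> \<nu> \<beta> x = lie13 \<xi> (riem_lie_expansion m \<xi> g) \<mu> \<alpha> \<nu> \<beta> x"
    by (simp, rule lie13_cong[OF _ Suc.prems]) (rule Suc.IH)
  then show ?case using lie13_riem_lie_expansion[OF Suc.hyps Suc.prems] by simp
qed

lemma lie02_pow_ricci:
  assumes "x \<in> U"
  shows "(lie02 \<xi> ^^ m) (ricci g) \<alpha> \<beta> x = (\<Sum>\<mu>\<in>UNIV. (lie13 \<xi> ^^ m) (riem g) \<mu> \<alpha> \<mu> \<beta> x)"
  using assms
proof (induction m arbitrary: x \<alpha> \<beta>)
  case 0 then show ?case by (simp add: ricci_def)
next
  case (Suc m)
  have smooth: "smooth13 U ((lie13 \<xi> ^^ m) (riem g))"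
    by (induction m) auto
  have "(lie02 \<xi> ^^ Suc m) (ricci g) \<alpha> \<beta> x
      = lie02 \<xi> (\<lambda>\<alpha> \<beta> y. \<Sum>\<mu>\<in>UNIV. (lie13 \<xi> ^^ m) (riem g) \<mu> \<alpha> \<mu> \<beta> y) \<alpha> \<beta> x"
    by (simp, rule lie02_cong[OF _ Suc.prems]) (rule Suc.IH)
  then show ?case using lie02_contract[OF smooth Suc.prems] by simp
qed

end

lemma sum_Hdelta:
  fixes \<nu> \<beta> :: "'n::finite"
  shows "(\<Sum>\<gamma>\<in>UNIV. \<Sum>\<rho>\<in>UNIV. Hdelta \<gamma> \<rho> \<nu> \<beta> * F \<gamma> \<rho>) = F \<nu> \<beta> - (F \<beta> \<nu> :: real)"
proof -
  have "(if \<gamma> = a \<and> \<rho> = b then 1 else 0) = (if a = \<gamma> then 1 else 0) * (if b = \<rho> then 1 else (0::real))"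
    for a b \<gamma> \<rho> :: 'n by auto
  then have "(\<Sum>\<gamma>\<in>UNIV. \<Sum>\<rho>\<in>UNIV. (if \<gamma> = a \<and> \<rho> = b then 1 else 0) * F \<gamma> \<rho>) = F a b" for a b
    by (simp add: mult.assoc sum_kronecker_mult flip: sum_distrib_left)
  then show ?thesis unfolding Hdelta_def left_diff_distrib sum_subtractf by simp
qed

lemma riem_lie_expansion_eq_bracketTerm:
  assumes "m \<ge> 2"
  shows "riem_lie_expansion m \<xi> g \<mu> \<alpha> \<nu> \<beta> x
    = bracketTerm m \<xi> g \<nu> \<mu> \<alpha> \<beta> x - bracketTerm m \<xi> g \<beta> \<mu> \<alpha> \<nu> x"
proof -
  have "(\<Sum>j\<in>{1..m-1}. h j) = (\<Sum>k\<in>{0..m-2}. h (k+1))" for h :: "nat \<Rightarrow> real"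
    using sum.shift_bounds_cl_Suc_ivl[of h 0 "m-2"] assms by (simp add: Suc_diff_Suc numeral_2_eq_2)
  then show ?thesis
    unfolding riem_lie_expansion_def bracketTerm_def alt_cov_def alt_compose_def ctr_compose_def
    by (simp only: sum_subtractf right_diff_distrib sum.distrib diff_diff_left)
qed

theorem mainTheorem12:
  fixes U :: "(real^'n::finite) set" and g :: "'n t02" and \<xi> :: "'n vf" and m :: nat
  assumes "open U" and "semi_riem_metric U g"
    and "\<forall>i. coord_smooth U (\<xi> i)"
    and "m \<ge> 2" and "x \<in> U"
  shows "(\<forall>\<mu> \<alpha> \<nu> \<beta>. (lie13 \<xi> ^^ m) (riem g) \<mu> \<alpha> \<nu> \<beta> x =
            (\<Sum>\<gamma>\<in>UNIV. \<Sum>\<rho>\<in>UNIV. Hdelta \<gamma> \<rho> \<nu> \<beta> * bracketTerm m \<xi> g \<gamma> \<mu> \<alpha> \<rho> x))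
       \<and> (\<forall>\<alpha> \<beta>. (lie02 \<xi> ^^ m) (ricci g) \<alpha> \<beta> x =
            (\<Sum>\<mu>\<in>UNIV. \<Sum>\<gamma>\<in>UNIV. \<Sum>\<rho>\<in>UNIV. Hdelta \<gamma> \<rho> \<mu> \<beta> * bracketTerm m \<xi> g \<gamma> \<mu> \<alpha> \<rho> x))"
proof -
  interpret metric_field_chart U g \<xi> using assms(1-3) by unfold_locales auto
  have riem: "(lie13 \<xi> ^^ m) (riem g) \<mu> \<alpha> \<nu> \<beta> x =
      (\<Sum>\<gamma>\<in>UNIV. \<Sum>\<rho>\<in>UNIV. Hdelta \<gamma> \<rho> \<nu> \<beta> * bracketTerm m \<xi> g \<gamma> \<mu> \<alpha> \<rho> x)" for \<mu> \<alpha> \<nu> \<beta>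
  proof -
    have "(lie13 \<xi> ^^ m) (riem g) \<mu> \<alpha> \<nu> \<beta> x = riem_lie_expansion m \<xi> g \<mu> \<alpha> \<nu> \<beta> x"
      using assms(4,5) by (intro lie13_pow_riem) auto
    also have "\<dots> = bracketTerm m \<xi> g \<nu> \<mu> \<alpha> \<beta> x - bracketTerm m \<xi> g \<beta> \<mu> \<alpha> \<nu> x"
      by (rule riem_lie_expansion_eq_bracketTerm[OF assms(4)])
    finally show ?thesis by (simp only: sum_Hdelta)
  qed
  show ?thesis
    using riem lie02_pow_ricci[OF assms(5)] by simp
qed


end
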